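(* Let $M:\mathbb{T}\to(0,\infty)$ be a positive scalar function on the unit circle $\mathbb{T}$, let $m\in\mathbb{N}$, and fix $\varepsilon\ge0$. For real coefficients $(p_0,\dots,p_m)$ and $(q_0,\dots,q_m)$ let $P(z)=\sum_{k=-m}^{m}p_kz^{-k}$ and $Q(z)=\sum_{k=-m}^{m}q_kz^{-k}$ with $p_{-k}=p_k$, $q_{-k}=q_k$. Then the set of coefficient vectors $(p_0,\dots,p_m,q_0,\dots,q_m)\in\mathbb{R}^{2m+2}$ satisfying (i) $P(z)>0$ and $Q(z)>0$ for all $z\in\mathbb{T}$, (ii) $q_0=1$, and (iii) $\max_{z\in\mathbb{T}}\big|P(z)/Q(z)-M(z)\big|\le\varepsilon$, is convex. *)

theory Defs
  imports "HOL-Analysis.Analysis"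
begin

definition sym_laurent :: "nat \<Rightarrow> (nat \<Rightarrow> real) \<Rightarrow> complex \<Rightarrow> complex" where
  "sym_laurent m p z = (\<Sum>k\<in>{-int m..int m}. complex_of_real (p (nat \<bar>k\<bar>)) * z powi (- k))"

text \<open>The set of coefficient vectors (p_0..p_m, q_0..q_m) in R^(2m+2), represented as
  pairs of functions nat => real vanishing beyond index m.\<close>
definition feasible_set ::
  "(complex \<Rightarrow> real) \<Rightarrow> nat \<Rightarrow> real \<Rightarrow> ((nat \<Rightarrow> real) \<times> (nat \<Rightarrow> real)) set" where
  "feasible_set M m \<epsilon> = {(p, q).
      (\<forall>k>m. p k = 0 \<and> q k = 0) \<and>
      (\<forall>z\<in>sphere 0 1. sym_laurent m p z \<in> \<real> \<and> 0 < Re (sym_laurent m p z)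
                       \<and> sym_laurent m q z \<in> \<real> \<and> 0 < Re (sym_laurent m q z)) \<and>
      q 0 = 1 \<and>
      (\<forall>z\<in>sphere 0 1. cmod (sym_laurent m p z / sym_laurent m q z - complex_of_real (M z)) \<le> \<epsilon>)}"

end

theory Submission
  imports Defs
begin

text \<open>On the unit circle P(z) and Q(z) are real with Q(z) > 0, so the approximation condition
  |P(z)/Q(z) - M(z)| \<le> \<epsilon> is equivalent to |P(z) - M(z) Q(z)| \<le> \<epsilon> Q(z). For fixed z this is a
  pair of linear inequalities in the coefficients, as are positivity and q_0 = 1, and P, Q depend
  linearly on the coefficients; hence the feasible set is an intersection of half-spaces and
  hyperplanes.\<close>

lemma sym_laurent_lincomb:
  "sym_laurent m (\<lambda>k. a * p k + b * q k) z
   = complex_of_real a * sym_laurent m p z + complex_of_real b * sym_laurent m q z"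
  unfolding sym_laurent_def by (simp add: sum_distrib_left sum.distrib algebra_simps)

lemma convex_combination_pos:
  fixes x y t :: real
  assumes "0 < x" "0 < y" "0 \<le> t" "t \<le> 1"
  shows "0 < t * x + (1 - t) * y"
proof (cases "t = 0")
  case False
  with assms have "0 < t * x" "0 \<le> (1 - t) * y" by simp_all
  then show ?thesis by linarith
qed (use assms in simp)

lemma abs_divide_diff_le_iff:
  fixes a b c e :: real
  assumes "0 < b"
  shows "\<bar>a / b - c\<bar> \<le> e \<longleftrightarrow> \<bar>a - c * b\<bar> \<le> e * b"
proof -
  have "a / b - c = (a - c * b) / b"
    using assms by (simp add: field_simps)
  then have "\<bar>a / b - c\<bar> = \<bar>a - c * b\<bar> / b"
    using assms by simp
  then show ?thesis
    using assms by (simp add: divide_le_eq)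
qed

lemma ratio_bound_convex_combination:
  fixes a1 a2 b1 b2 t c e :: real
  assumes b: "0 < b1" "0 < b2" and t: "0 \<le> t" "t \<le> 1"
    and bound1: "\<bar>a1 / b1 - c\<bar> \<le> e" and bound2: "\<bar>a2 / b2 - c\<bar> \<le> e"
  shows "\<bar>(t * a1 + (1 - t) * a2) / (t * b1 + (1 - t) * b2) - c\<bar> \<le> e"
proof -
  have lin1: "\<bar>a1 - c * b1\<bar> \<le> e * b1" and lin2: "\<bar>a2 - c * b2\<bar> \<le> e * b2"
    using bound1 bound2 b by (simp_all add: abs_divide_diff_le_iff)
  have "\<bar>(t * a1 + (1 - t) * a2) - c * (t * b1 + (1 - t) * b2)\<bar>
        = \<bar>t * (a1 - c * b1) + (1 - t) * (a2 - c * b2)\<bar>"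
    by (simp add: algebra_simps)
  also have "\<dots> \<le> t * \<bar>a1 - c * b1\<bar> + (1 - t) * \<bar>a2 - c * b2\<bar>"
    using abs_triangle_ineq [of "t * (a1 - c * b1)" "(1 - t) * (a2 - c * b2)"] t
    by (simp add: abs_mult)
  also have "\<dots> \<le> t * (e * b1) + (1 - t) * (e * b2)"
    using lin1 lin2 t by (simp add: add_mono mult_left_mono)
  also have "\<dots> = e * (t * b1 + (1 - t) * b2)"
    by (simp add: algebra_simps)
  finally show ?thesis
    using convex_combination_pos[OF b t] by (simp add: abs_divide_diff_le_iff)
qed

lemma real_ratio_condition_iff:
  "(P \<in> \<real> \<and> 0 < Re P \<and> Q \<in> \<real> \<and> 0 < Re Q) \<and> cmod (P / Q - complex_of_real c) \<le> e
   \<longleftrightarrow> (\<exists>a b. P = complex_of_real a \<and> Q = complex_of_real b \<and> 0 < a \<and> 0 < b \<and> \<bar>a / b - c\<bar> \<le> e)"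
proof
  assume "(P \<in> \<real> \<and> 0 < Re P \<and> Q \<in> \<real> \<and> 0 < Re Q) \<and> cmod (P / Q - complex_of_real c) \<le> e"
  moreover obtain a b where "P = complex_of_real a" "Q = complex_of_real b"
    using calculation Reals_cases by metis
  ultimately show "\<exists>a b. P = complex_of_real a \<and> Q = complex_of_real b \<and> 0 < a \<and> 0 < b \<and> \<bar>a / b - c\<bar> \<le> e"
    by (metis Re_complex_of_real norm_of_real of_real_diff of_real_divide)
qed (metis Re_complex_of_real Reals_of_real norm_of_real of_real_diff of_real_divide)

lemma feasible_set_iff:
  "(p, q) \<in> feasible_set M m \<epsilon> \<longleftrightarrow>
     (\<forall>k>m. p k = 0 \<and> q k = 0) \<and> q 0 = 1 \<and>
     (\<forall>z\<in>sphere 0 1. \<exists>a b. sym_laurent m p z = complex_of_real a \<and> sym_laurent m q z = complex_of_real b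
                            \<and> 0 < a \<and> 0 < b \<and> \<bar>a / b - M z\<bar> \<le> \<epsilon>)"
  unfolding feasible_set_def real_ratio_condition_iff [symmetric] by auto

theorem lemma4p5:
  fixes M :: "complex \<Rightarrow> real" and m :: nat and \<epsilon> :: real
  assumes "\<forall>z\<in>sphere 0 1. 0 < M z"
    and "0 \<le> \<epsilon>"
  shows "\<forall>p1 q1 p2 q2 (t::real). (p1, q1) \<in> feasible_set M m \<epsilon> \<longrightarrow> (p2, q2) \<in> feasible_set M m \<epsilon>
           \<longrightarrow> 0 \<le> t \<longrightarrow> t \<le> 1
           \<longrightarrow> (\<lambda>k. t * p1 k + (1 - t) * p2 k, \<lambda>k. t * q1 k + (1 - t) * q2 k) \<in> feasible_set M m \<epsilon>"
proof (intro allI impI)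
  fix p1 q1 p2 q2 and t :: real
  assume F1: "(p1, q1) \<in> feasible_set M m \<epsilon>" and F2: "(p2, q2) \<in> feasible_set M m \<epsilon>"
    and t: "0 \<le> t" "t \<le> 1"
  have "\<exists>a b. sym_laurent m (\<lambda>k. t * p1 k + (1 - t) * p2 k) z = complex_of_real a
           \<and> sym_laurent m (\<lambda>k. t * q1 k + (1 - t) * q2 k) z = complex_of_real b
           \<and> 0 < a \<and> 0 < b \<and> \<bar>a / b - M z\<bar> \<le> \<epsilon>" if z: "z \<in> sphere 0 1" for z
  proof -
    obtain a1 b1 a2 b2 where
      "sym_laurent m p1 z = complex_of_real a1" "sym_laurent m q1 z = complex_of_real b1"
      "0 < a1" "0 < b1" "\<bar>a1 / b1 - M z\<bar> \<le> \<epsilon>"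
      "sym_laurent m p2 z = complex_of_real a2" "sym_laurent m q2 z = complex_of_real b2"
      "0 < a2" "0 < b2" "\<bar>a2 / b2 - M z\<bar> \<le> \<epsilon>"
      using F1 F2 z unfolding feasible_set_iff by meson
    then show ?thesis
      using t convex_combination_pos ratio_bound_convex_combination
      by (intro exI[of _ "t * a1 + (1 - t) * a2"] exI[of _ "t * b1 + (1 - t) * b2"])
         (simp add: sym_laurent_lincomb)
  qed
  with F1 F2 show "(\<lambda>k. t * p1 k + (1 - t) * p2 k, \<lambda>k. t * q1 k + (1 - t) * q2 k) \<in> feasible_set M m \<epsilon>"
    unfolding feasible_set_iff by simp
qed

end
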